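(* In the setting described in the context, consider the symmetrical case: all users have the same contention window $W$, the same packet error function $e_i=e$ (hence the same $G_i=G$), and the same rate interval $[R_{min},R_{max}]$, with $R_{min}$ sufficiently small and $R_{max}$ sufficiently large that the unique equilibrium $\mathbf R^*$ of $G_R(\mathbf W)$ satisfies $\partial S_i/\partial R_i=0$ for all $i$. Then this equilibrium is symmetrical: $R_i^*=R_j^*$ and $\rho_i^*=\rho_j^*$ for all $i,j\in\mathcal N$.
   Context: Model: users $\mathcal N=\{1,\dots,n\}$, fixed integer $m\ge1$. User $i$ has contention window $W_i$ and data rate $R_i\in[R_{min,i},R_{max,i}]$, and a packet error rate function $e_i$ with values in $[0,1]$; $G_i(R)=(1-e_i(R))R$. For $x\in[0,1]$, $\Gamma_i(x)=\frac{2}{W_i+1+xW_i\sum_{l=0}^{m-1}(2x)^l}$. Given $(W_j,R_j)_j$, the stationary state $(\tau_j,p_j,q_j)_j\in[0,1]^{3n}$ (assumed unique) solves $q_j=1-(1-p_j)(1-e_j(R_j))$, $\tau_j=\Gamma_j(q_j)$, $p_j=1-\prod_{k\ne j}(1-\tau_k)$; $\rho_j=1-\tau_j$. Utility of user $i$: $S_i=\frac{(1-\rho_i)\prod_{j\ne i}\rho_j\,G_i(R_i)}{1-\prod_{j}\rho_j}$. The game $G_R(\mathbf W)$: players $\mathcal N$, strategy sets $[R_{min,i},R_{max,i}]$, utilities $S_i$; it has a unique equilibrium (rate profile from which no player gains by unilateral deviation). Standing assumptions on $e$: $e(0)=0$, $e(R)\to1$ as $R\to\infty$; on the rate interval, $e$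 increasing, twice differentiable, strictly convex with $e'>0$ increasing; $G(0)=0$, $G(R)\to0$ as $R\to\infty$, $G$ strictly concave there. Non-atomic assumption (standing): a change of one user's strategy has negligible influence on the system state; $\prod_{j\ne i}\rho_j$ does not depend on user $i$'s own strategy, and $\prod_{j}\rho_j\simeq\prod_{j\ne i}\rho_j$. *)

theory Defs
  imports "HOL-Analysis.Analysis"
begin

definition strictly_convex_on :: "real set \<Rightarrow> (real \<Rightarrow> real) \<Rightarrow> bool" where
  "strictly_convex_on S f \<longleftrightarrow>
     (\<forall>x\<in>S. \<forall>y\<in>S. x \<noteq> y \<longrightarrow> (\<forall>t::real. 0 < t \<and> t < 1 \<longrightarrow>
        f ((1 - t) * x + t * y) < (1 - t) * f x + t * f y))"

definition strictly_concave_on :: "real set \<Rightarrow> (real \<Rightarrow> real) \<Rightarrow> bool" where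
  "strictly_concave_on S f \<longleftrightarrow> strictly_convex_on S (\<lambda>x. - f x)"

definition Gamma :: "real \<Rightarrow> nat \<Rightarrow> real \<Rightarrow> real" where
  "Gamma W m x = 2 / (W + 1 + x * W * (\<Sum>l<m. (2 * x) ^ l))"

definition Gfun :: "(real \<Rightarrow> real) \<Rightarrow> real \<Rightarrow> real" where
  "Gfun e R = (1 - e R) * R"

definition is_stationary ::
  "('n::finite \<Rightarrow> real) \<Rightarrow> ('n \<Rightarrow> real \<Rightarrow> real) \<Rightarrow> nat \<Rightarrow> ('n \<Rightarrow> real)
    \<Rightarrow> ('n \<Rightarrow> real) \<Rightarrow> ('n \<Rightarrow> real) \<Rightarrow> ('n \<Rightarrow> real) \<Rightarrow> bool" where
  "is_stationary W e m R tau p q \<longleftrightarrow>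
     (\<forall>j. tau j \<in> {0..1} \<and> p j \<in> {0..1} \<and> q j \<in> {0..1} \<and>
          q j = 1 - (1 - p j) * (1 - e j (R j)) \<and>
          tau j = Gamma (W j) m (q j) \<and>
          p j = 1 - (\<Prod>k\<in>UNIV - {j}. 1 - tau k))"

text \<open>The (assumed unique) stationary attempt probabilities, and rho_j = 1 - tau_j.\<close>
definition stat_tau ::
  "('n::finite \<Rightarrow> real) \<Rightarrow> ('n \<Rightarrow> real \<Rightarrow> real) \<Rightarrow> nat \<Rightarrow> ('n \<Rightarrow> real) \<Rightarrow> 'n \<Rightarrow> real" where
  "stat_tau W e m R = (THE tau. \<exists>p q. is_stationary W e m R tau p q)"

definition rho ::
  "('n::finite \<Rightarrow> real) \<Rightarrow> ('n \<Rightarrow> real \<Rightarrow> real) \<Rightarrow> nat \<Rightarrow> ('n \<Rightarrow> real) \<Rightarrow> 'n \<Rightarrow> real" where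
  "rho W e m R j = 1 - stat_tau W e m R j"

definition utility ::
  "('n::finite \<Rightarrow> real) \<Rightarrow> ('n \<Rightarrow> real \<Rightarrow> real) \<Rightarrow> nat \<Rightarrow> ('n \<Rightarrow> real) \<Rightarrow> 'n \<Rightarrow> real" where
  "utility W e m R i =
     (1 - rho W e m R i) * (\<Prod>j\<in>UNIV - {i}. rho W e m R j) * Gfun (e i) (R i)
       / (1 - (\<Prod>j\<in>UNIV. rho W e m R j))"

definition is_equilibrium ::
  "('n::finite \<Rightarrow> real) \<Rightarrow> ('n \<Rightarrow> real \<Rightarrow> real) \<Rightarrow> nat \<Rightarrow> ('n \<Rightarrow> real) \<Rightarrow> ('n \<Rightarrow> real)
    \<Rightarrow> ('n \<Rightarrow> real) \<Rightarrow> bool" where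
  "is_equilibrium W e m Rmin Rmax R \<longleftrightarrow>
     (\<forall>i. R i \<in> {Rmin i..Rmax i} \<and>
          (\<forall>r\<in>{Rmin i..Rmax i}. utility W e m (R(i := r)) i \<le> utility W e m R i))"

text \<open>Partial derivative of S_i w.r.t. R_i under the non-atomic assumption:
prod_{j<>i} rho_j (hence p_i) is held fixed, and prod_j rho_j is replaced by
prod_{j<>i} rho_j; only rho_i = 1 - Gamma_i(q_i) and G_i(R_i) vary with R_i.\<close>
definition nonatomic_utility_own ::
  "('n::finite \<Rightarrow> real) \<Rightarrow> ('n \<Rightarrow> real \<Rightarrow> real) \<Rightarrow> nat \<Rightarrow> ('n \<Rightarrow> real) \<Rightarrow> 'n \<Rightarrow> real \<Rightarrow> real" where
  "nonatomic_utility_own W e m R i r =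
     (let A = (\<Prod>j\<in>UNIV - {i}. rho W e m R j);
          p = 1 - A;
          tau_r = Gamma (W i) m (1 - (1 - p) * (1 - e i r))
      in tau_r * A * Gfun (e i) r / (1 - A))"

definition standing_error :: "(real \<Rightarrow> real) \<Rightarrow> real \<Rightarrow> real \<Rightarrow> bool" where
  "standing_error e Rmin Rmax \<longleftrightarrow>
     (\<forall>R. e R \<in> {0..1}) \<and> e 0 = 0 \<and> (e \<longlongrightarrow> 1) at_top \<and>
     strict_mono_on {Rmin..Rmax} e \<and>
     (\<forall>x\<in>{Rmin..Rmax}. e differentiable (at x) \<and> deriv e differentiable (at x)) \<and>
     strictly_convex_on {Rmin..Rmax} e \<and>
     (\<forall>x\<in>{Rmin..Rmax}. deriv e x > 0) \<and> strict_mono_on {Rmin..Rmax} (deriv e) \<and>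
     Gfun e 0 = 0 \<and> (Gfun e \<longlongrightarrow> 0) at_top \<and>
     strictly_concave_on {Rmin..Rmax} (Gfun e)"

end

theory Submission
  imports Defs "HOL-Combinatorics.Transposition"
begin

text \<open>Relabelling the users maps stationary states to stationary states, so the
utilities of a symmetric game commute with permutations of the rate profile, and a
permuted equilibrium is again an equilibrium. Uniqueness of the equilibrium then makes
it invariant under every transposition, i.e. constant; the rhos follow.\<close>

lemma prod_Diff_singleton_reindex:
  fixes f :: "'n::finite \<Rightarrow> 'a::comm_monoid_mult"
  assumes "bij \<sigma>"
  shows "(\<Prod>k\<in>UNIV - {j}. f (\<sigma> k)) = (\<Prod>k\<in>UNIV - {\<sigma> j}. f k)"
proof -
  have "bij_betw \<sigma> (UNIV - {j}) (UNIV - {\<sigma> j})"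
    using assms by (simp add: bij_betw_DiffI bij_betw_singletonI bij_def)
  then show ?thesis
    using prod.reindex_bij_betw[of \<sigma> "UNIV - {j}" "UNIV - {\<sigma> j}" f] by simp
qed

lemma prod_UNIV_reindex:
  fixes f :: "'n::finite \<Rightarrow> 'a::comm_monoid_mult"
  assumes "bij \<sigma>"
  shows "(\<Prod>k\<in>UNIV. f (\<sigma> k)) = (\<Prod>k\<in>UNIV. f k)"
  using prod.reindex_bij_betw[of \<sigma> UNIV UNIV f] assms by simp

lemma is_stationary_permute:
  assumes "bij \<sigma>" "is_stationary W e m R tau p q"
  shows "is_stationary (W \<circ> \<sigma>) (e \<circ> \<sigma>) m (R \<circ> \<sigma>) (tau \<circ> \<sigma>) (p \<circ> \<sigma>) (q \<circ> \<sigma>)"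
  using assms(2) prod_Diff_singleton_reindex[OF assms(1), of "\<lambda>k. 1 - tau k"]
  unfolding is_stationary_def comp_def by metis

lemma stat_tau_eqI:
  assumes "\<exists>!s. is_stationary W e m R (fst s) (fst (snd s)) (snd (snd s))"
    and "is_stationary W e m R tau p q"
  shows "stat_tau W e m R = tau"
  unfolding stat_tau_def
proof (rule the_equality)
  show "\<exists>p q. is_stationary W e m R tau p q" using assms(2) by blast
next
  fix t assume "\<exists>p q. is_stationary W e m R t p q"
  then obtain p' q' where "is_stationary W e m R t p' q'" by blast
  with assms have "(t, p', q') = (tau, p, q)" by (metis fst_conv snd_conv)
  then show "t = tau" by simp
qed

lemma stat_tau_permute:
  assumes "bij \<sigma>"
    and "\<exists>!s. is_stationary W e m R (fst s) (fst (snd s)) (snd (snd s))"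
    and "\<exists>!s. is_stationary (W \<circ> \<sigma>) (e \<circ> \<sigma>) m (R \<circ> \<sigma>) (fst s) (fst (snd s)) (snd (snd s))"
  shows "stat_tau (W \<circ> \<sigma>) (e \<circ> \<sigma>) m (R \<circ> \<sigma>) = stat_tau W e m R \<circ> \<sigma>"
proof -
  from assms(2) obtain tau p q where s: "is_stationary W e m R tau p q" by auto
  then have "stat_tau W e m R = tau" by (rule stat_tau_eqI[OF assms(2)])
  moreover have "stat_tau (W \<circ> \<sigma>) (e \<circ> \<sigma>) m (R \<circ> \<sigma>) = tau \<circ> \<sigma>"
    by (rule stat_tau_eqI[OF assms(3) is_stationary_permute[OF assms(1) s]])
  ultimately show ?thesis by simp
qed

lemma rho_permute:
  assumes "bij \<sigma>"
    and "\<exists>!s. is_stationary W e m R (fst s) (fst (snd s)) (snd (snd s))"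
    and "\<exists>!s. is_stationary (W \<circ> \<sigma>) (e \<circ> \<sigma>) m (R \<circ> \<sigma>) (fst s) (fst (snd s)) (snd (snd s))"
  shows "rho (W \<circ> \<sigma>) (e \<circ> \<sigma>) m (R \<circ> \<sigma>) = rho W e m R \<circ> \<sigma>"
  using stat_tau_permute[OF assms] by (simp add: rho_def fun_eq_iff)

lemma utility_permute:
  assumes "bij \<sigma>"
    and "\<exists>!s. is_stationary W e m R (fst s) (fst (snd s)) (snd (snd s))"
    and "\<exists>!s. is_stationary (W \<circ> \<sigma>) (e \<circ> \<sigma>) m (R \<circ> \<sigma>) (fst s) (fst (snd s)) (snd (snd s))"
  shows "utility (W \<circ> \<sigma>) (e \<circ> \<sigma>) m (R \<circ> \<sigma>) i = utility W e m R (\<sigma> i)"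
  unfolding utility_def rho_permute[OF assms] comp_apply
  using prod_Diff_singleton_reindex[OF assms(1), of "rho W e m R"]
    prod_UNIV_reindex[OF assms(1), of "rho W e m R"] by simp

lemma is_equilibrium_permute_symmetric:
  fixes R :: "'n::finite \<Rightarrow> real" and \<sigma> :: "'n \<Rightarrow> 'n"
  assumes "bij \<sigma>"
    and stat_unique: "\<And>R::'n \<Rightarrow> real. (\<forall>j. R j \<in> {Rmin..Rmax}) \<Longrightarrow>
         \<exists>!s. is_stationary (\<lambda>_. W) (\<lambda>_. e) m R (fst s) (fst (snd s)) (snd (snd s))"
    and eq: "is_equilibrium (\<lambda>_. W) (\<lambda>_. e) m (\<lambda>_. Rmin) (\<lambda>_. Rmax) R"
  shows "is_equilibrium (\<lambda>_. W) (\<lambda>_. e) m (\<lambda>_. Rmin) (\<lambda>_. Rmax) (R \<circ> \<sigma>)"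
proof -
  let ?S = "utility (\<lambda>_::'n. W) (\<lambda>_. e) m"
  have utility_comp: "?S (R' \<circ> \<sigma>) i = ?S R' (\<sigma> i)" if "\<forall>j. R' j \<in> {Rmin..Rmax}" for R' i
    using utility_permute[OF assms(1), of "\<lambda>_. W" "\<lambda>_. e" m R' i]
      stat_unique[OF that] stat_unique[of "R' \<circ> \<sigma>"] that by (simp add: comp_def)
  have R_range: "\<forall>j. R j \<in> {Rmin..Rmax}" using eq unfolding is_equilibrium_def by simp
  show ?thesis unfolding is_equilibrium_def
  proof (intro allI conjI ballI)
    fix i show "(R \<circ> \<sigma>) i \<in> {Rmin..Rmax}" using R_range by simp
    fix r assume r: "r \<in> {Rmin..Rmax}"
    have "(R \<circ> \<sigma>)(i := r) = R(\<sigma> i := r) \<circ> \<sigma>"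
      using assms(1) by (auto simp: fun_eq_iff bij_def inj_eq)
    then have "?S ((R \<circ> \<sigma>)(i := r)) i = ?S (R(\<sigma> i := r)) (\<sigma> i)"
      using utility_comp R_range r by simp
    also have "\<dots> \<le> ?S R (\<sigma> i)"
      using eq r unfolding is_equilibrium_def by simp
    also have "\<dots> = ?S (R \<circ> \<sigma>) i" using utility_comp[OF R_range] by simp
    finally show "?S ((R \<circ> \<sigma>)(i := r)) i \<le> ?S (R \<circ> \<sigma>) i" .
  qed
qed

theorem theorem5:
  fixes W :: real and m :: nat and e :: "real \<Rightarrow> real" and Rmin Rmax :: real
    and Rstar :: "'n::finite \<Rightarrow> real"
  assumes m: "m \<ge> 1"
    and W: "W > 0"
    and rates: "0 < Rmin" "Rmin \<le> Rmax"
    and err: "standing_error e Rmin Rmax"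
    and stat_unique: "\<And>R::'n \<Rightarrow> real. (\<forall>j. R j \<in> {Rmin..Rmax}) \<Longrightarrow>
         \<exists>!s. is_stationary (\<lambda>_. W) (\<lambda>_. e) m R (fst s) (fst (snd s)) (snd (snd s))"
    and eq_unique: "\<exists>!R::'n \<Rightarrow> real. is_equilibrium (\<lambda>_. W) (\<lambda>_. e) m (\<lambda>_. Rmin) (\<lambda>_. Rmax) R"
    and eq: "is_equilibrium (\<lambda>_. W) (\<lambda>_. e) m (\<lambda>_. Rmin) (\<lambda>_. Rmax) Rstar"
    and foc: "\<And>i. (nonatomic_utility_own (\<lambda>_. W) (\<lambda>_. e) m Rstar i
                     has_real_derivative 0) (at (Rstar i))"
  shows "\<forall>i j. Rstar i = Rstar j \<and>
           rho (\<lambda>_. W) (\<lambda>_. e) m Rstar i = rho (\<lambda>_. W) (\<lambda>_. e) m Rstar j"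
proof (intro allI conjI)
  fix i j :: 'n
  let ?\<sigma> = "Transposition.transpose i j"
  have "is_equilibrium (\<lambda>_. W) (\<lambda>_. e) m (\<lambda>_. Rmin) (\<lambda>_. Rmax) (Rstar \<circ> ?\<sigma>)"
    by (rule is_equilibrium_permute_symmetric[OF bij_transpose stat_unique eq])
  with eq_unique eq have invariant: "Rstar \<circ> ?\<sigma> = Rstar" by blast
  then show "Rstar i = Rstar j" by (metis comp_apply transpose_apply_first)
  have "\<forall>k. Rstar k \<in> {Rmin..Rmax}" using eq unfolding is_equilibrium_def by simp
  then have "rho (\<lambda>_. W) (\<lambda>_. e) m (Rstar \<circ> ?\<sigma>) = rho (\<lambda>_. W) (\<lambda>_. e) m Rstar \<circ> ?\<sigma>"
    using rho_permute[OF bij_transpose, of "\<lambda>_. W" "\<lambda>_. e" m Rstar i j]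
      stat_unique[of Rstar] stat_unique[of "Rstar \<circ> ?\<sigma>"] by (simp add: comp_def)
  then show "rho (\<lambda>_. W) (\<lambda>_. e) m Rstar i = rho (\<lambda>_. W) (\<lambda>_. e) m Rstar j"
    unfolding invariant by (metis comp_apply transpose_apply_first)
qed

end
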